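(* Let $G$ be a graph with $m\ge 1$ edges and let $a_1<a_2<\cdots<a_m$ be positive integers. Then there exist an orientation $D$ of $G$ and a bijection $\tau:A(D)\to\{a_1,\dots,a_m\}$ such that $s_{(D,\tau)}(v)\ge -a_m$ for every vertex $v\in V(G)$.
   Context: All graphs are finite and simple. An orientation $D$ of $G$ assigns to each edge one direction; $A(D)$ is its arc set. For an injective map $\tau$ from $A(D)$ to a set of positive integers and a vertex $u$, $s_{(D,\tau)}(u)$ is the sum of $\tau$-labels of all arcs entering $u$ minus the sum of $\tau$-labels of all arcs leaving $u$, with $s_{(D,\tau)}(u)=0$ if $u$ is isolated. *)

theory Defs
  imports Main
begin

definition simple_graph :: "'a set \<Rightarrow> 'a set set \<Rightarrow> bool" where
  "simple_graph V E \<longleftrightarrow> finite V \<and> (\<forall>e\<in>E. e \<subseteq> V \<and> card e = 2)"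

definition is_orientation :: "'a set set \<Rightarrow> ('a \<times> 'a) set \<Rightarrow> bool" where
  "is_orientation E A \<longleftrightarrow>
     (\<forall>(u,v)\<in>A. {u,v} \<in> E) \<and>
     (\<forall>e\<in>E. \<exists>!p. p \<in> A \<and> {fst p, snd p} = e)"

definition arc_sum :: "('a \<times> 'a) set \<Rightarrow> ('a \<times> 'a \<Rightarrow> int) \<Rightarrow> 'a \<Rightarrow> int" where
  "arc_sum A \<tau> u = (\<Sum>p\<in>{p\<in>A. snd p = u}. \<tau> p) - (\<Sum>p\<in>{p\<in>A. fst p = u}. \<tau> p)"

end

theory Submission
  imports Defs
begin

text \<open>Induction on the number of edges, with the stronger invariant that one prescribed vertex
  \<open>w\<close> ends with a nonnegative sum. Remove an edge \<open>ux\<close> with \<open>x = w\<close> (if \<open>w\<close> has an edge at all),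
  orient the rest with \<open>u\<close> as prescribed vertex, and give the arc \<open>(u,x)\<close> the largest label \<open>l\<close>.
  Then \<open>u\<close> drops from \<open>\<ge> 0\<close> to \<open>\<ge> -l\<close>, \<open>w = x\<close> rises from \<open>\<ge> -l\<close> to \<open>\<ge> 0\<close>, and all other sums
  keep their bound, which is at least \<open>-l\<close>.\<close>

lemma bij_betw_fun_upd_insert:
  assumes "bij_betw f A B" "x \<notin> A" "y \<notin> B"
  shows "bij_betw (f(x := y)) (insert x A) (insert y B)"
proof -
  have "bij_betw (f(x := y)) A B"
    using assms(1,2) by (subst bij_betw_cong[where g = f]) auto
  moreover have "bij_betw (f(x := y)) {x} {y}" by simp
  ultimately have "bij_betw (f(x := y)) (A \<union> {x}) (B \<union> {y})"
    using assms(2,3) by (intro bij_betw_combine) auto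
  then show ?thesis by simp
qed

lemma arc_sum_insert:
  assumes "finite A" "(u, x) \<notin> A" "u \<noteq> x"
  shows "arc_sum (insert (u, x) A) (\<tau>((u, x) := c)) v =
         arc_sum A \<tau> v + (if v = x then c else 0) - (if v = u then c else 0)"
proof -
  have unchanged: "(\<Sum>p\<in>{p\<in>A. P p}. (\<tau>((u, x) := c)) p) = (\<Sum>p\<in>{p\<in>A. P p}. \<tau> p)" for P
    using assms(2) by (intro sum.cong) auto
  have "{p\<in>insert (u, x) A. P p} = (if P (u, x) then insert (u, x) else id) {p\<in>A. P p}" for P
    by auto
  then have sum_insert: "(\<Sum>p\<in>{p\<in>insert (u, x) A. P p}. (\<tau>((u, x) := c)) p) =
        (\<Sum>p\<in>{p\<in>A. P p}. \<tau> p) + (if P (u, x) then c else 0)" for P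
    using assms(1,2) by (simp add: unchanged del: fun_upd_apply) simp
  show ?thesis
    unfolding arc_sum_def sum_insert using assms(3) by simp
qed

lemma arc_sum_eq_0_if_not_incident:
  assumes "is_orientation E A" "\<forall>e\<in>E. v \<notin> e"
  shows "arc_sum A \<tau> v = 0"
proof -
  have "{p\<in>A. snd p = v} = {}" "{p\<in>A. fst p = v} = {}"
    using assms unfolding is_orientation_def by fastforce+
  then show ?thesis
    unfolding arc_sum_def by (simp only: sum.empty diff_self)
qed

lemma is_orientation_insert:
  assumes A: "is_orientation (E - {{u, x}}) A" and ux: "{u, x} \<in> E"
  shows "is_orientation E (insert (u, x) A)"
  unfolding is_orientation_def
proof
  have arcs: "\<forall>(p, q)\<in>A. {p, q} \<in> E - {{u, x}}"
    and unique: "\<forall>e\<in>E - {{u, x}}. \<exists>!p. p \<in> A \<and> {fst p, snd p} = e"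
    using A unfolding is_orientation_def by auto
  show "\<forall>(p, q)\<in>insert (u, x) A. {p, q} \<in> E"
    using arcs ux by auto
  show "\<forall>e\<in>E. \<exists>!p. p \<in> insert (u, x) A \<and> {fst p, snd p} = e"
  proof
    fix e assume "e \<in> E"
    show "\<exists>!p. p \<in> insert (u, x) A \<and> {fst p, snd p} = e"
    proof (cases "e = {u, x}")
      case True
      show ?thesis
      proof (rule ex1I[of _ "(u, x)"])
        show "(u, x) \<in> insert (u, x) A \<and> {fst (u, x), snd (u, x)} = e"
          using True by simp
        fix p assume "p \<in> insert (u, x) A \<and> {fst p, snd p} = e"
        then show "p = (u, x)"
          using arcs True by (cases p) auto
      qed
    next
      case False
      with \<open>e \<in> E\<close> have "e \<in> E - {{u, x}}" by simp
      with unique have "\<exists>!p. p \<in> A \<and> {fst p, snd p} = e" by (rule bspec)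
      then obtain p where p: "p \<in> A \<and> {fst p, snd p} = e"
        and uniq: "\<forall>q. q \<in> A \<and> {fst q, snd q} = e \<longrightarrow> q = p"
        by (rule ex1E)
      show ?thesis
      proof (rule ex1I[of _ p])
        show "p \<in> insert (u, x) A \<and> {fst p, snd p} = e"
          using p by simp
        fix q assume "q \<in> insert (u, x) A \<and> {fst q, snd q} = e"
        with False have "q \<in> A \<and> {fst q, snd q} = e" by auto
        with uniq show "q = p" by blast
      qed
    qed
  qed
qed

lemma obtain_edge_into:
  assumes "\<forall>e\<in>E. card e = 2" "E \<noteq> {}"
  obtains u x where "{u, x} \<in> E" "u \<noteq> x" "u \<noteq> w" "x = w \<or> (\<forall>e\<in>E. w \<notin> e)"
proof (cases "\<exists>e\<in>E. w \<in> e")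
  case True
  then obtain e where "e \<in> E" "w \<in> e" by blast
  moreover obtain p q where "e = {p, q}" "p \<noteq> q"
    using assms(1) \<open>e \<in> E\<close> card_2_iff by metis
  ultimately show ?thesis
    using that by (metis insert_commute empty_iff insert_iff)
next
  case False
  obtain e where "e \<in> E" using assms(2) by blast
  moreover obtain p q where "e = {p, q}" "p \<noteq> q"
    using assms(1) \<open>e \<in> E\<close> card_2_iff by metis
  ultimately show ?thesis
    using that False by blast
qed

lemma extend_orientation_by_heavy_arc:
  assumes A: "is_orientation (E - {{u, x}}) A" and ux: "{u, x} \<in> E" "u \<noteq> x"
    and \<tau>: "bij_betw \<tau> A L" "l \<notin> L" "finite L"
    and bounded: "\<forall>v. - c \<le> arc_sum A \<tau> v" and nonneg_u: "0 \<le> arc_sum A \<tau> u"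
    and "0 \<le> c" "c \<le> l"
  obtains A' \<tau>' where "is_orientation E A'" "bij_betw \<tau>' A' (insert l L)"
    "\<forall>v. - l \<le> arc_sum A' \<tau>' v" "0 \<le> arc_sum A' \<tau>' x"
proof
  have "(u, x) \<notin> A" using A unfolding is_orientation_def by auto
  have "finite A" using \<tau>(1,3) bij_betw_finite by blast
  have sums: "arc_sum (insert (u, x) A) (\<tau>((u, x) := l)) v =
              arc_sum A \<tau> v + (if v = x then l else 0) - (if v = u then l else 0)" for v
    using \<open>finite A\<close> \<open>(u, x) \<notin> A\<close> ux(2) by (rule arc_sum_insert)
  show "is_orientation E (insert (u, x) A)"
    using A ux(1) by (rule is_orientation_insert)
  show "bij_betw (\<tau>((u, x) := l)) (insert (u, x) A) (insert l L)"
    using \<tau>(1) \<open>(u, x) \<notin> A\<close> \<tau>(2) by (rule bij_betw_fun_upd_insert)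
  have "- l \<le> arc_sum (insert (u, x) A) (\<tau>((u, x) := l)) v" for v
    unfolding sums using bounded[rule_format, of v] nonneg_u \<open>0 \<le> c\<close> \<open>c \<le> l\<close> by auto
  then show "\<forall>v. - l \<le> arc_sum (insert (u, x) A) (\<tau>((u, x) := l)) v" ..
  show "0 \<le> arc_sum (insert (u, x) A) (\<tau>((u, x) := l)) x"
    unfolding sums using bounded[rule_format, of x] \<open>c \<le> l\<close> ux(2) by simp
qed

lemma orientation_with_arc_sums_bounded:
  fixes L :: "int set"
  assumes "finite E" "\<forall>e\<in>E. card e = 2"
    and "finite L" "card L = card E" "\<forall>l\<in>L. 0 \<le> l"
  shows "\<exists>A \<tau>. is_orientation E A \<and> bij_betw \<tau> A L \<and>
           (\<forall>v. - Max (insert 0 L) \<le> arc_sum A \<tau> v) \<and> 0 \<le> arc_sum A \<tau> w"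
  using assms
proof (induction "card E" arbitrary: E L w)
  case 0
  then have "E = {}" "L = {}" by auto
  then show ?case
    by (intro exI[of _ "{}"]) (simp add: is_orientation_def arc_sum_def bij_betw_def)
next
  case (Suc n)
  have "E \<noteq> {}" using Suc.hyps(2) by auto
  with Suc.prems(2) obtain u x where ux: "{u, x} \<in> E" "u \<noteq> x" "u \<noteq> w"
    and towards_w: "x = w \<or> (\<forall>e\<in>E. w \<notin> e)"
    by (rule obtain_edge_into)
  have "L \<noteq> {}" using Suc.hyps(2) Suc.prems(4) by auto
  define l where "l = Max L"
  have "l \<in> L" "0 \<le> l" "Max (insert 0 L) = l"
    using Suc.prems(3,5) \<open>L \<noteq> {}\<close> unfolding l_def by (auto simp: max_def)
  let ?E = "E - {{u, x}}" and ?L = "L - {l}"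
  have card: "n = card ?E" "card ?L = card ?E"
    using Suc.hyps(2) Suc.prems(1,3,4) ux(1) \<open>l \<in> L\<close> by simp_all
  obtain A \<tau> where "is_orientation ?E A" "bij_betw \<tau> A ?L"
    "\<forall>v. - Max (insert 0 ?L) \<le> arc_sum A \<tau> v" "0 \<le> arc_sum A \<tau> u"
    using Suc.hyps(1)[OF card(1), of ?L u] Suc.prems card(2) by auto
  moreover have "0 \<le> Max (insert 0 ?L)" "Max (insert 0 ?L) \<le> l"
    using Suc.prems(3) \<open>0 \<le> l\<close> unfolding l_def by auto
  ultimately obtain A' \<tau>' where A': "is_orientation E A'" "bij_betw \<tau>' A' (insert l ?L)"
    and "\<forall>v. - l \<le> arc_sum A' \<tau>' v" "0 \<le> arc_sum A' \<tau>' x"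
    using extend_orientation_by_heavy_arc[of E u x A \<tau> ?L l "Max (insert 0 ?L)"]
      ux(1,2) finite_Diff[OF Suc.prems(3)] by blast
  moreover have "0 \<le> arc_sum A' \<tau>' w"
    using towards_w \<open>0 \<le> arc_sum A' \<tau>' x\<close> arc_sum_eq_0_if_not_incident[OF A'(1)] by auto
  ultimately show ?case
    using \<open>l \<in> L\<close> \<open>Max (insert 0 L) = l\<close> by (auto simp: insert_absorb)
qed

theorem lemma2p1:
  fixes V :: "'v set" and E :: "'v set set" and a :: "nat \<Rightarrow> int" and m :: nat
  assumes "simple_graph V E"
    and "card E = m" and "m \<ge> 1"
    and "\<forall>i\<in>{1..m}. a i > 0"
    and "\<forall>i j. 1 \<le> i \<and> i < j \<and> j \<le> m \<longrightarrow> a i < a j"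
  shows "\<exists>A \<tau>. is_orientation E A \<and> bij_betw \<tau> A (a ` {1..m}) \<and>
           (\<forall>v\<in>V. arc_sum A \<tau> v \<ge> - a m)"
proof -
  have "finite E" using assms(2,3) by (intro card_ge_0_finite) simp
  moreover have "\<forall>e\<in>E. card e = 2" using assms(1) unfolding simple_graph_def by blast
  moreover have "strict_mono_on {1..m} a" using assms(5) by (auto intro: strict_mono_onI)
  then have "card (a ` {1..m}) = card E"
    using assms(2) by (simp add: card_image strict_mono_on_imp_inj_on)
  moreover have "\<forall>l\<in>a ` {1..m}. 0 \<le> l" using assms(4) by force
  moreover have "Max (insert 0 (a ` {1..m})) = a m"
  proof (rule Max_eqI)
    show "l \<le> a m" if "l \<in> insert 0 (a ` {1..m})" for l
      using that assms(3-5) by (auto simp: order_le_less)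
  qed (use assms(3) in auto)
  ultimately obtain A \<tau> where "is_orientation E A" "bij_betw \<tau> A (a ` {1..m})"
    and "\<forall>v. - a m \<le> arc_sum A \<tau> v"
    using orientation_with_arc_sums_bounded[of E "a ` {1..m}" undefined] by auto
  then show ?thesis by blast
qed

end
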